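(* Let $\mathcal{X}$ be finite and let $V_n:\mathcal{X}^n\rightsquigarrow\mathcal{Y}_n$ ($\mathcal{Y}_n$ countable) be a channel sequence such that the limit $\mathbf{I}(V)=\lim_{n\to\infty}\mathbf{I}(V_n)/n$ exists, and such that $\varphi_n=-\log_2\inf\big(\{V_n(y|x)\}_{x,y}\setminus\{0\}\big)$ does not converge to $0$. Then there exists a sequence of input distributions $\hat p_n$ on $\mathcal{X}^n$ with $\lim_{n\to\infty}\mathbf{I}(V_n,\hat p_n)/n=\mathbf{I}(V)$ and $\mathbf{V}(V_n,\hat p_n)=O(\varphi_n^2+n^2)$.
   Context: A channel $W:\mathcal{A}\rightsquigarrow\mathcal{B}$ is a family of probability distributions $W(\cdot|a)$ on $\mathcal{B}$. For a distribution $p$: $p\circ W(a,b)=p(a)W(b|a)$, $p\bullet W(b)=\sum_a p\circ W(a,b)$; $\mathbf{i}(W,p,a,b)=\log_2\frac{W(b|a)}{p\bullet W(b)}$ if $W(b|a)>0$ and $p\bullet W(b)>0$, else $0$; $\mathbf{I}(W,p)=\mathbb{E}_{p\circ W}[\mathbf{i}(W,p,a,b)]$, $\mathbf{I}(W)=\max_p\mathbf{I}(W,p)$; the mutual information variance is $\mathbf{V}(W,p)=\mathbb{E}_{p\circ W(a,b)}\big[(\mathbf{i}(W,p,a,b)-\mathbf{I}(W,p))^2\big]$. $a_n=O(b_n)$ means $|a_n|\le Cb_n$ for some constant $C$ and all large $n$. *)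

theory Defs
  imports "HOL-Probability.Probability"
begin

definition joint_dist :: "'a pmf \<Rightarrow> ('a \<Rightarrow> 'b pmf) \<Rightarrow> ('a \<times> 'b) pmf" where
  "joint_dist p W = bind_pmf p (\<lambda>a. map_pmf (\<lambda>b. (a, b)) (W a))"

definition out_dist :: "'a pmf \<Rightarrow> ('a \<Rightarrow> 'b pmf) \<Rightarrow> 'b pmf" where
  "out_dist p W = bind_pmf p W"

definition info_density :: "('a \<Rightarrow> 'b pmf) \<Rightarrow> 'a pmf \<Rightarrow> 'a \<Rightarrow> 'b \<Rightarrow> real" where
  "info_density W p a b =
     (if pmf (W a) b > 0 \<and> pmf (out_dist p W) b > 0
      then log 2 (pmf (W a) b / pmf (out_dist p W) b) else 0)"

definition mutual_info :: "('a \<Rightarrow> 'b pmf) \<Rightarrow> 'a pmf \<Rightarrow> real" where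
  "mutual_info W p =
     measure_pmf.expectation (joint_dist p W) (\<lambda>(a, b). info_density W p a b)"

definition mi_variance :: "('a \<Rightarrow> 'b pmf) \<Rightarrow> 'a pmf \<Rightarrow> real" where
  "mi_variance W p =
     measure_pmf.expectation (joint_dist p W)
       (\<lambda>(a, b). (info_density W p a b - mutual_info W p)^2)"

definition capacity :: "'a set \<Rightarrow> ('a \<Rightarrow> 'b pmf) \<Rightarrow> real" where
  "capacity A W = Sup {mutual_info W p | p. set_pmf p \<subseteq> A}"

definition min_prob_exp :: "'a set \<Rightarrow> ('a \<Rightarrow> 'b pmf) \<Rightarrow> ereal" where
  "min_prob_exp A W =
     (let m = Inf {pmf (W a) b | a b. a \<in> A \<and> pmf (W a) b \<noteq> 0}
      in if m = 0 then \<infinity> else ereal (- log 2 m))"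

end

theory Submission
  imports Defs
begin

text \<open>Take \<open>p\<^sub>n\<close> within 1 of the capacity of \<open>V\<^sub>n\<close>; then \<open>I(V\<^sub>n, p\<^sub>n)/n\<close> has the same limit.
  The variance is at most the second moment of the information density
  \<open>i(x, y) = log (V\<^sub>n(y|x) / P(y))\<close>. On the support of the joint distribution,
  \<open>P(y) \<ge> p\<^sub>n(x) V\<^sub>n(y|x)\<close> gives \<open>i \<le> -log p\<^sub>n(x)\<close>, and \<open>P(y) \<le> 1\<close> gives
  \<open>i \<ge> log V\<^sub>n(y|x) \<ge> -\<phi>\<^sub>n\<close>. So the variance is at most
  \<open>\<phi>\<^sub>n\<^sup>2 + \<Sum>\<^sub>x p\<^sub>n(x) log\<^sup>2 p\<^sub>n(x)\<close>, and this sum is \<open>O(log\<^sup>2 |\<X>\<^sup>n|) = O(n\<^sup>2)\<close>.\<close>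

lemma pmf_bind_pmf_ge: "pmf p a * pmf (W a) b \<le> pmf (bind_pmf p W) b"
proof -
  have "ennreal (pmf p a * pmf (W a) b) = (\<integral>\<^sup>+ x. ennreal (pmf (W a) b) * indicator {a} x \<partial>p)"
    by (simp add: emeasure_pmf_single ennreal_mult' mult.commute)
  also have "\<dots> \<le> (\<integral>\<^sup>+ x. ennreal (pmf (W x) b) \<partial>p)"
    by (intro nn_integral_mono) (simp split: split_indicator)
  also have "\<dots> = ennreal (pmf (bind_pmf p W) b)"
    by (rule ennreal_pmf_bind[symmetric])
  finally show ?thesis by (auto simp: ennreal_le_iff2)
qed

lemma map_fst_joint_dist: "map_pmf fst (joint_dist p W) = p"
  by (simp add: joint_dist_def map_bind_pmf map_pmf_comp bind_return_pmf')

lemma set_pmf_joint_dist: "set_pmf (joint_dist p W) = (SIGMA a:set_pmf p. set_pmf (W a))"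
  by (auto simp: joint_dist_def)

lemma
  assumes "finite A" "set_pmf p \<subseteq> A"
  shows integrable_joint_dist_fst: "integrable (joint_dist p W) (\<lambda>x. g (fst x) :: real)"
    and integral_joint_dist_fst:
      "measure_pmf.expectation (joint_dist p W) (\<lambda>x. g (fst x)) = (\<Sum>a\<in>A. pmf p a * g a)"
proof -
  have "integrable p g"
    using assms by (intro integrable_measure_pmf_finite) (rule finite_subset)
  then show "integrable (joint_dist p W) (\<lambda>x. g (fst x))"
    using integrable_map_pmf_eq[of fst "joint_dist p W" g] by (simp add: map_fst_joint_dist)
  have "measure_pmf.expectation (joint_dist p W) (\<lambda>x. g (fst x)) = measure_pmf.expectation p g"
    using integral_map_pmf[of fst "joint_dist p W" g] by (simp add: map_fst_joint_dist)
  also have "\<dots> = (\<Sum>a\<in>A. pmf p a * g a)"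
    using assms by (subst integral_measure_pmf[OF assms(1)]) auto
  finally show "measure_pmf.expectation (joint_dist p W) (\<lambda>x. g (fst x)) = (\<Sum>a\<in>A. pmf p a * g a)" .
qed

lemma info_density_le_neg_log:
  assumes "pmf p a > 0"
  shows "info_density W p a b \<le> - log 2 (pmf p a)"
proof (cases "pmf (W a) b > 0 \<and> pmf (out_dist p W) b > 0")
  case True
  have "pmf (W a) b / pmf (out_dist p W) b \<le> pmf (W a) b / (pmf p a * pmf (W a) b)"
    using True assms pmf_bind_pmf_ge[of p a W b]
    by (intro divide_left_mono) (auto simp: out_dist_def)
  also have "\<dots> = 1 / pmf p a" using True by simp
  finally have "log 2 (pmf (W a) b / pmf (out_dist p W) b) \<le> log 2 (1 / pmf p a)"
    using True by (intro log_mono) auto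
  then show ?thesis
    using True assms by (simp add: info_density_def log_divide)
next
  case False
  then show ?thesis
    using assms pmf_le_1[of p a]
    unfolding info_density_def if_not_P[OF False] by simp
qed

lemma log_le_info_density:
  assumes "pmf p a > 0" "0 < m" "m \<le> pmf (W a) b"
  shows "log 2 m \<le> info_density W p a b"
proof -
  have out_pos: "pmf (out_dist p W) b > 0"
    using assms pmf_bind_pmf_ge[of p a W b] unfolding out_dist_def
    by (meson less_le_trans mult_pos_pos)
  have "pmf (W a) b / 1 \<le> pmf (W a) b / pmf (out_dist p W) b"
    using assms out_pos pmf_le_1[of "out_dist p W" b] by (intro divide_left_mono) auto
  then have "m \<le> pmf (W a) b / pmf (out_dist p W) b"
    using assms(3) by simp
  then show ?thesis
    using assms out_pos by (simp add: info_density_def)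
qed

lemma info_density_sq_le:
  assumes "pmf p a > 0" "0 < m" "m \<le> pmf (W a) b"
  shows "(info_density W p a b)^2 \<le> (log 2 m)^2 + (log 2 (pmf p a))^2"
proof (cases "info_density W p a b \<ge> 0")
  case True
  then have "(info_density W p a b)^2 \<le> (- log 2 (pmf p a))^2"
    using info_density_le_neg_log[OF assms(1)] by (intro power_mono) auto
  then show ?thesis by (simp add: add_increasing)
next
  case False
  then have "(- info_density W p a b)^2 \<le> (- log 2 m)^2"
    using log_le_info_density[of p a m W b, OF assms] by (intro power_mono) auto
  then show ?thesis by (simp add: add_increasing2)
qed

lemma neg_log_mult_le:
  fixes t :: real
  assumes "0 \<le> t"
  shows "t * - log 2 t \<le> 1 / ln 2"
proof (cases "t = 0")
  case False
  with assms have t: "t > 0" by simp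
  have "- ln t \<le> 1 / t - 1"
    using ln_le_minus_one[of "1 / t"] t by (simp add: ln_div)
  then have "t * - ln t \<le> t * (1 / t - 1)"
    using t by (intro mult_left_mono) auto
  also have "\<dots> \<le> 1" using t by (simp add: right_diff_distrib)
  finally show ?thesis by (simp add: log_def divide_simps)
qed simp

lemma mult_ln_sq_le:
  fixes t K :: real
  assumes "0 \<le> t" "t \<le> 1" "K \<ge> 1"
  shows "t * (ln t)^2 \<le> t * (4 * (ln K)^2) + 16 / K"
proof (cases "t = 0")
  case False
  with assms have t: "t > 0" by simp
  \<comment> \<open>Above \<open>1/K\<^sup>2\<close> we have \<open>|ln t| \<le> 2 ln K\<close>; below it \<open>t ln\<^sup>2 t \<le> 16 \<surd>t < 16/K\<close>.\<close>
  have ln_t: "ln t \<le> 0" and ln_K: "ln K \<ge> 0" using t assms by simp_all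
  show ?thesis
  proof (cases "t \<ge> 1 / K^2")
    case True
    have "- (2 * ln K) \<le> ln t"
      using True assms t ln_le_cancel_iff[of "1 / K^2" t] by (simp add: ln_div ln_realpow)
    then have "(- ln t)^2 \<le> (2 * ln K)^2"
      using ln_t by (intro power_mono) auto
    then have "t * (ln t)^2 \<le> t * (4 * (ln K)^2)"
      using t by (intro mult_left_mono) (auto simp: power_mult_distrib)
    then show ?thesis using assms by (simp add: add_increasing2)
  next
    case False
    define u where "u = sqrt (sqrt t)"
    have u: "u > 0" "u^2 = sqrt t" "ln u = ln t / 4"
      using t by (simp_all add: u_def ln_sqrt)
    have "- ln t / 4 \<le> 1 / u"
      using ln_le_minus_one[of "1 / u"] u by (simp add: ln_div)
    then have "(- ln t)^2 \<le> (4 / u)^2"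
      using ln_t by (intro power_mono) auto
    then have "t * (ln t)^2 \<le> t * (16 / sqrt t)"
      using t u by (intro mult_left_mono) (auto simp: power_divide)
    also have "\<dots> = 16 * sqrt t"
      using t by (simp add: field_simps real_div_sqrt)
    also have "t < (1 / K)^2" using False by (simp add: power_divide)
    then have "sqrt t < 1 / K"
      using assms real_sqrt_less_iff[of t "(1 / K)^2"] by simp
    then have "16 * sqrt t \<le> 16 / K" by simp
    finally show ?thesis using t by (simp add: add_increasing)
  qed
qed (use assms in simp)

lemma sum_pmf_log_sq_le:
  assumes "finite A" "set_pmf p \<subseteq> A"
  shows "(\<Sum>a\<in>A. pmf p a * (log 2 (pmf p a))^2) \<le> (4 * (ln (card A))^2 + 16) / (ln 2)^2"
proof -
  define K where "K = real (card A)"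
  have "A \<noteq> {}" using assms(2) set_pmf_not_empty[of p] by blast
  then have K: "K \<ge> 1" using assms(1) by (simp add: K_def Suc_leI card_gt_0_iff)
  have "(\<Sum>a\<in>A. pmf p a * (ln (pmf p a))^2) \<le> (\<Sum>a\<in>A. pmf p a * (4 * (ln K)^2) + 16 / K)"
    using K pmf_le_1 by (intro sum_mono mult_ln_sq_le) auto
  also have "\<dots> = 4 * (ln K)^2 + 16"
    using sum_pmf_eq_1[OF assms] K by (simp add: sum.distrib flip: sum_distrib_right) (simp add: K_def)
  finally show ?thesis
    by (simp add: K_def log_def power_divide divide_right_mono flip: sum_divide_distrib)
qed

lemma mutual_info_le_card:
  assumes "finite A" "set_pmf p \<subseteq> A"
  shows "mutual_info W p \<le> card A / ln 2"
proof (cases "integrable (joint_dist p W) (\<lambda>(a, b). info_density W p a b)")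
  case True
  have "mutual_info W p \<le> measure_pmf.expectation (joint_dist p W) (\<lambda>x. - log 2 (pmf p (fst x)))"
    unfolding mutual_info_def
    using integrable_joint_dist_fst[OF assms]
    by (intro integral_mono_AE True)
       (auto simp: AE_measure_pmf_iff set_pmf_joint_dist intro!: info_density_le_neg_log pmf_positive)
  also have "\<dots> = (\<Sum>a\<in>A. pmf p a * - log 2 (pmf p a))"
    by (rule integral_joint_dist_fst[OF assms])
  also have "\<dots> \<le> (\<Sum>a\<in>A. 1 / ln 2)"
    by (intro sum_mono neg_log_mult_le) simp
  finally show ?thesis by simp
qed (simp add: mutual_info_def not_integrable_integral_eq)

lemma mi_variance_nonneg: "0 \<le> mi_variance W p"
  unfolding mi_variance_def by (intro Bochner_Integration.integral_nonneg) (simp add: split_beta)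

lemma mi_variance_le:
  assumes "finite A" "set_pmf p \<subseteq> A" "m > 0"
    and min_prob: "\<And>a b. a \<in> A \<Longrightarrow> pmf (W a) b \<noteq> 0 \<Longrightarrow> m \<le> pmf (W a) b"
  shows "mi_variance W p \<le> (log 2 m)^2 + (\<Sum>a\<in>A. pmf p a * (log 2 (pmf p a))^2)"
proof -
  define J where "J = joint_dist p W"
  define f where "f x = info_density W p (fst x) (snd x)" for x
  define g where "g a = (log 2 m)^2 + (log 2 (pmf p a))^2" for a
  have f_sq_le: "(f x)^2 \<le> g (fst x)" if "x \<in> set_pmf J" for x
    using that assms min_prob[of "fst x" "snd x"] unfolding J_def f_def g_def
    by (intro info_density_sq_le) (auto simp: set_pmf_joint_dist pmf_positive set_pmf_iff)
  have int_g: "integrable J (\<lambda>x. g (fst x))"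
    unfolding J_def by (rule integrable_joint_dist_fst[OF assms(1,2)])
  have int_f_sq: "integrable J (\<lambda>x. (f x)^2)"
  proof (rule Bochner_Integration.integrable_bound[OF int_g])
    show "AE x in J. norm ((f x)^2) \<le> norm (g (fst x))"
      using f_sq_le by (auto simp: AE_measure_pmf_iff intro: order_trans[OF _ abs_ge_self])
  qed simp
  have int_f: "integrable J f"
    by (rule measure_pmf.square_integrable_imp_integrable[OF _ int_f_sq]) simp
  have "mi_variance W p = measure_pmf.expectation J (\<lambda>x. (f x)^2) - (measure_pmf.expectation J f)^2"
    unfolding mi_variance_def mutual_info_def J_def f_def split_beta'
    using measure_pmf.variance_eq[OF int_f int_f_sq] by (simp add: J_def f_def)
  also have "\<dots> \<le> measure_pmf.expectation J (\<lambda>x. (f x)^2)"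
    by simp
  also have "\<dots> \<le> measure_pmf.expectation J (\<lambda>x. g (fst x))"
    by (rule integral_mono_AE[OF int_f_sq int_g]) (use f_sq_le in \<open>auto simp: AE_measure_pmf_iff\<close>)
  also have "\<dots> = (\<Sum>a\<in>A. pmf p a * g a)"
    unfolding J_def by (rule integral_joint_dist_fst[OF assms(1,2)])
  also have "\<dots> = (log 2 m)^2 + (\<Sum>a\<in>A. pmf p a * (log 2 (pmf p a))^2)"
    using sum_pmf_eq_1[OF assms(1,2)] by (simp add: g_def distrib_left sum.distrib flip: sum_distrib_right)
  finally show ?thesis .
qed

lemma mi_variance_le_min_prob_exp:
  assumes "finite A" "set_pmf p \<subseteq> A"
  shows "ereal (mi_variance W p)
           \<le> (min_prob_exp A W)^2 + ereal ((4 * (ln (card A))^2 + 16) / (ln 2)^2)"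
proof -
  define M where "M = {pmf (W a) b | a b. a \<in> A \<and> pmf (W a) b \<noteq> 0}"
  have phi: "min_prob_exp A W = (if Inf M = 0 then \<infinity> else ereal (- log 2 (Inf M)))"
    unfolding min_prob_exp_def M_def Let_def ..
  show ?thesis
  proof (cases "Inf M = 0")
    case False
    obtain a where a: "a \<in> set_pmf p" using set_pmf_not_empty[of p] by blast
    obtain b where b: "b \<in> set_pmf (W a)" using set_pmf_not_empty[of "W a"] by blast
    have "a \<in> A" "pmf (W a) b \<noteq> 0"
      using assms(2) a b by (auto simp: set_pmf_iff)
    then have "pmf (W a) b \<in> M"
      unfolding M_def by blast
    moreover have "bdd_below M" unfolding M_def by (rule bdd_belowI[of _ 0]) auto
    ultimately have M_lower: "Inf M \<le> pmf (W a) b" if "a \<in> A" "pmf (W a) b \<noteq> 0" for a b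
      using that by (auto intro!: cInf_lower simp: M_def)
    have "Inf M \<ge> 0"
      using \<open>pmf (W a) b \<in> M\<close> by (intro cInf_greatest) (auto simp: M_def)
    with False have "Inf M > 0" by simp
    have "mi_variance W p \<le> (log 2 (Inf M))^2 + (\<Sum>a\<in>A. pmf p a * (log 2 (pmf p a))^2)"
      by (rule mi_variance_le[OF assms \<open>Inf M > 0\<close> M_lower])
    also have "\<dots> \<le> (log 2 (Inf M))^2 + (4 * (ln (card A))^2 + 16) / (ln 2)^2"
      using sum_pmf_log_sq_le[OF assms] by simp
    finally show ?thesis
      using False by (simp add: phi)
  qed (simp add: phi)
qed

lemma capacity_approx:
  assumes "finite A" "A \<noteq> {}" "\<epsilon> > 0"
  obtains p where "set_pmf p \<subseteq> A" "capacity A W - \<epsilon> < mutual_info W p"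
    "mutual_info W p \<le> capacity A W"
proof -
  define S where "S = {mutual_info W p | p. set_pmf p \<subseteq> A}"
  obtain a where "a \<in> A" using assms(2) by blast
  then have ne: "S \<noteq> {}" unfolding S_def by (auto intro!: exI[of _ "return_pmf a"])
  have bdd: "bdd_above S"
    unfolding S_def using mutual_info_le_card[OF assms(1)]
    by (intro bdd_aboveI[of _ "card A / ln 2"]) auto
  obtain x where "x \<in> S" "Sup S - \<epsilon> < x"
    using less_cSupD[OF ne, of "Sup S - \<epsilon>"] assms(3) by auto
  moreover have "x \<le> Sup S" by (rule cSup_upper[OF \<open>x \<in> S\<close> bdd])
  ultimately show ?thesis
    using that unfolding capacity_def S_def[symmetric] by (auto simp: S_def)
qed

lemma ereal_sq_add_le_mult_add:
  fixes x :: ereal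
  assumes "1 \<le> C" "d \<le> C * y"
  shows "x^2 + ereal d \<le> ereal C * (x^2 + ereal y)"
proof (cases x)
  case (real r)
  have "r^2 \<le> C * r^2" using assms mult_right_mono[of 1 C "r^2"] by simp
  then show ?thesis using real assms by (simp add: distrib_left)
qed (use assms in auto)

lemma mi_variance_lists_le:
  fixes V :: "nat \<Rightarrow> 'x::finite list \<Rightarrow> 'y pmf" and p :: "nat \<Rightarrow> 'x list pmf"
  assumes p: "\<And>n. set_pmf (p n) \<subseteq> {xs. length xs = n}"
  shows "\<exists>C>0. \<forall>\<^sub>F n in sequentially.
           ereal \<bar>mi_variance (V n) (p n)\<bar>
             \<le> ereal C * ((min_prob_exp {xs. length xs = n} (V n))^2 + ereal (real n)^2)"
proof (intro exI conjI)
  define c where "c = real CARD('x)"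
  define C where "C = max 1 ((4 * (ln c)^2 + 16) / (ln 2)^2)"
  show "C > 0" by (simp add: C_def)
  show "\<forall>\<^sub>F n in sequentially. ereal \<bar>mi_variance (V n) (p n)\<bar>
      \<le> ereal C * ((min_prob_exp {xs. length xs = n} (V n))^2 + ereal (real n)^2)"
  proof (rule eventually_sequentiallyI)
    fix n :: nat
    assume "n \<ge> 1"
    have fin: "finite {xs :: 'x list. length xs = n}"
      using finite_lists_length_eq[of "UNIV :: 'x set" n] by simp
    have "ln (card {xs :: 'x list. length xs = n}) = real n * ln c"
      using card_lists_length_eq[of "UNIV :: 'x set" n] by (simp add: c_def ln_realpow)
    moreover have "4 * (real n * ln c)^2 + 16 \<le> (4 * (ln c)^2 + 16) * (real n)^2"
      using \<open>n \<ge> 1\<close> by (simp add: algebra_simps)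
    ultimately have "(4 * (ln (card {xs :: 'x list. length xs = n}))^2 + 16) / (ln 2)^2
        \<le> (4 * (ln c)^2 + 16) / (ln 2)^2 * (real n)^2"
      by (simp add: divide_right_mono)
    also have "\<dots> \<le> C * (real n)^2"
      unfolding C_def by (intro mult_right_mono) simp_all
    finally have bound: "(4 * (ln (card {xs :: 'x list. length xs = n}))^2 + 16) / (ln 2)^2
        \<le> C * (real n)^2" .
    have "C \<ge> 1" by (simp add: C_def)
    from order_trans[OF mi_variance_le_min_prob_exp[OF fin p] ereal_sq_add_le_mult_add[OF this bound]]
    show "ereal \<bar>mi_variance (V n) (p n)\<bar>
        \<le> ereal C * ((min_prob_exp {xs. length xs = n} (V n))^2 + ereal (real n)^2)"
      using mi_variance_nonneg[of "V n" "p n"] by simp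
  qed
qed

lemma LIMSEQ_div_of_nat_bounded_gap:
  fixes a b :: "nat \<Rightarrow> real"
  assumes lim: "(\<lambda>n. a n / real n) \<longlonglongrightarrow> L"
    and "\<And>n. a n - c \<le> b n" "\<And>n. b n \<le> a n"
  shows "(\<lambda>n. b n / real n) \<longlonglongrightarrow> L"
proof (rule tendsto_sandwich[OF _ _ _ lim])
  show "(\<lambda>n. (a n - c) / real n) \<longlonglongrightarrow> L"
    using tendsto_diff[OF lim lim_const_over_n[of c]] by (simp add: diff_divide_distrib)
  show "\<forall>\<^sub>F n in sequentially. (a n - c) / real n \<le> b n / real n"
    "\<forall>\<^sub>F n in sequentially. b n / real n \<le> a n / real n"
    using assms(2,3) by (auto intro!: always_eventually divide_right_mono)
qed

theorem proposition9:
  fixes V :: "nat \<Rightarrow> 'x::finite list \<Rightarrow> 'y::countable pmf" and IV :: real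
  assumes lim: "(\<lambda>n. capacity {xs. length xs = n} (V n) / real n) \<longlonglongrightarrow> IV"
    and phi: "\<not> ((\<lambda>n. min_prob_exp {xs. length xs = n} (V n)) \<longlonglongrightarrow> 0)"
  shows "\<exists>p :: nat \<Rightarrow> 'x list pmf.
           (\<forall>n. set_pmf (p n) \<subseteq> {xs. length xs = n}) \<and>
           (\<lambda>n. mutual_info (V n) (p n) / real n) \<longlonglongrightarrow> IV \<and>
           (\<exists>C>0. \<forall>\<^sub>F n in sequentially.
              ereal \<bar>mi_variance (V n) (p n)\<bar>
                \<le> ereal C * ((min_prob_exp {xs. length xs = n} (V n))^2 + ereal (real n)^2))"
proof -
  have fin: "finite {xs :: 'x list. length xs = n}" for n
    using finite_lists_length_eq[of "UNIV :: 'x set" n] by simp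
  have "replicate n undefined \<in> {xs :: 'x list. length xs = n}" for n
    by simp
  then have ne: "{xs :: 'x list. length xs = n} \<noteq> {}" for n
    by blast
  have "\<forall>n. \<exists>q. set_pmf q \<subseteq> {xs. length xs = n}
           \<and> capacity {xs. length xs = n} (V n) - 1 < mutual_info (V n) q
           \<and> mutual_info (V n) q \<le> capacity {xs. length xs = n} (V n)"
    using capacity_approx[OF fin ne zero_less_one] by metis
  then obtain p where p: "\<And>n. set_pmf (p n) \<subseteq> {xs. length xs = n}"
      "\<And>n. capacity {xs. length xs = n} (V n) - 1 < mutual_info (V n) (p n)"
      "\<And>n. mutual_info (V n) (p n) \<le> capacity {xs. length xs = n} (V n)"
    by metis
  have "(\<lambda>n. mutual_info (V n) (p n) / real n) \<longlonglongrightarrow> IV"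
    using p(2,3) by (intro LIMSEQ_div_of_nat_bounded_gap[OF lim, of 1]) (auto intro: less_imp_le)
  then show ?thesis
    using p(1) mi_variance_lists_le[OF p(1), of V] by blast
qed

end
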